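(* Let $n\ge 1$, let $\mu_1,\ldots,\mu_n$ be continuous probability measures on $\mathbb{R}^n$ and let $\alpha_1,\ldots,\alpha_n\in[0,1]$. Let $f_1,\ldots,f_n:S^{n-1}\to\mathbb{R}^n$ be functions (not necessarily continuous) such that $\mu_i\big(H^+_{v,\langle v,f_i(v)\rangle}\big)=\alpha_i$ for all $i\in[n]$ and all $v\in S^{n-1}$, and such that each image $\operatorname{Im} f_i$ is bounded. If $\operatorname{Im} f_1,\ldots,\operatorname{Im} f_n$ can be separated by hyperplanes, then there exists an oriented hyperplane $H$ such that $\mu_i(H^+)=\alpha_i$ for all $i\in[n]$.
   Context: A continuous probability measure on $\mathbb{R}^n$ is a Borel probability measure that is absolutely continuous with respect to Lebesgue measure. For $v\in\mathbb{R}^n\setminus\{0\}$ and $\lambda\in\mathbb{R}$, $H_{v,\lambda}=\{x:\langle x,v\rangle=\lambda\}$, $H^+_{v,\lambda}=\{x:\langle x,v\rangle\ge\lambda\}$, $H^-_{v,\lambda}=\{x:\langle x,v\rangle\le\lambda\}$; for an oriented hyperplane $H$, $H^+$ is the closed half-space in the direction of its normal. Sets $S_1,\ldots,S_n\subset\mathbb{R}^n$ can be separated by hyperplanes if for every function $\sigma:[n]\to\{-1,+1\}$ there is a hyperplane $H$ such that for every $i$, $S_i$ is contained in the open half-space $\operatorname{int} H^{\sigma(i)}$ (where $H^{+1}=H^+$, $H^{-1}=H^-$). $[n]=\{1,\ldots,n\}$. *)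

theory Defs
  imports "HOL-Probability.Probability"
begin

definition halfspace_plus :: "'a::real_inner \<Rightarrow> real \<Rightarrow> 'a set" where
  "halfspace_plus v l = {x. inner x v \<ge> l}"

definition halfspace_minus :: "'a::real_inner \<Rightarrow> real \<Rightarrow> 'a set" where
  "halfspace_minus v l = {x. inner x v \<le> l}"

definition continuous_prob_measure :: "'a::euclidean_space measure \<Rightarrow> bool" where
  "continuous_prob_measure M \<longleftrightarrow>
     sets M = sets borel \<and> prob_space M \<and> absolutely_continuous lborel M"

text \<open>Sets S i (i ranging over the index type 'n, i.e. [n]) can be separated by
  hyperplanes: for every sign pattern sigma (True = +1, False = -1) there is a
  hyperplane H_{v,l} (v nonzero) with each S i inside the interior of H^{sigma(i)}.\<close>
definition separable_by_hyperplanes :: "('n \<Rightarrow> 'a::real_inner set) \<Rightarrow> bool" where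
  "separable_by_hyperplanes S \<longleftrightarrow>
     (\<forall>\<sigma> :: 'n \<Rightarrow> bool. \<exists>v l. v \<noteq> 0 \<and>
        (\<forall>i. S i \<subseteq> interior (if \<sigma> i then halfspace_plus v l else halfspace_minus v l)))"

end

theory Submission
  imports Defs
begin

text \<open>Put K i = closure (convex hull (Im f i)).  Strict separation makes every choice of points
  x i \<in> K i affinely independent, so the hyperplane through them has a normal N(x) depending
  continuously on x.  Moving each x i along N(x) by the defect \<mu> i(H+) - \<alpha> i and projecting
  back to K i is a continuous self-map of the product of the K i; at a Brouwer fixed point all
  defects vanish, since \<mu> i(H+) is antitone in the offset and f i (N/|N|) \<in> K i lies at
  level \<alpha> i.  As closures may lose strict separation, this is done for the K i shrunk by a
  factor 1 - \<epsilon> towards a point of Im f i; letting \<epsilon> \<rightarrow> 0, compactness and the continuity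
  of \<mu> i(H+) in the hyperplane (hyperplanes are \<mu> i-null) give the result.\<close>

lemma halfspace_plus_scaleR:
  fixes v :: "'a::real_inner"
  assumes "c > 0"
  shows "halfspace_plus (c *\<^sub>R v) (c * l) = halfspace_plus v l"
  using assms by (auto simp: halfspace_plus_def)

lemma halfspace_plus_sgn:
  fixes v :: "'a::real_inner"
  shows "halfspace_plus (sgn v) (inner (sgn v) z) = halfspace_plus v (inner v z)"
proof (cases "v = 0")
  case False
  then have "inverse (norm v) > 0"
    by simp
  from halfspace_plus_scaleR[OF this] show ?thesis
    by (simp add: sgn_div_norm)
qed (simp add: halfspace_plus_def)

lemma closed_halfspace_plus: "closed (halfspace_plus (v::'a::real_inner) l)"
  unfolding halfspace_plus_def by (intro closed_Collect_le continuous_intros)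

lemma continuous_prob_measure_space:
  assumes "continuous_prob_measure (M :: 'a::euclidean_space measure)"
  shows "space M = UNIV"
  using assms unfolding continuous_prob_measure_def by (metis sets_eq_imp_space_eq space_borel)

lemma halfspace_plus_in_sets:
  assumes "continuous_prob_measure (M :: 'a::euclidean_space measure)"
  shows "halfspace_plus v l \<in> sets M"
  using assms borel_closed[OF closed_halfspace_plus] unfolding continuous_prob_measure_def by auto

lemma antimono_measure_halfspace_plus:
  assumes "continuous_prob_measure (M :: 'a::euclidean_space measure)"
  shows "antimono (\<lambda>l. measure M (halfspace_plus v l))"
proof
  interpret prob_space M
    using assms unfolding continuous_prob_measure_def by auto
  show "measure M (halfspace_plus v l') \<le> measure M (halfspace_plus v l)" if "l \<le> l'" for l l'
    using that halfspace_plus_in_sets[OF assms]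
    by (intro finite_measure_mono) (auto simp: halfspace_plus_def)
qed

lemma hyperplane_null_sets:
  assumes "continuous_prob_measure (M :: 'a::euclidean_space measure)" "v \<noteq> 0"
  shows "{x. inner x v = l} \<in> null_sets M"
proof -
  have "negligible {x. v \<bullet> x = l}"
    using negligible_hyperplane assms(2) by blast
  moreover have "{x. v \<bullet> x = l} \<in> sets lborel"
    by (simp add: borel_closed closed_hyperplane)
  ultimately have "{x. v \<bullet> x = l} \<in> null_sets lborel"
    using negligible_iff_null_sets null_sets_completion_iff by blast
  then show ?thesis
    using assms(1) unfolding continuous_prob_measure_def absolutely_continuous_def
    by (auto simp: inner_commute)
qed

lemma tendsto_measure_halfspace_plus:
  fixes M :: "'a::euclidean_space measure"
  assumes M: "continuous_prob_measure M" and v: "v \<noteq> 0"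
    and vs: "vs \<longlonglongrightarrow> v" and ls: "ls \<longlonglongrightarrow> l"
  shows "(\<lambda>k. measure M (halfspace_plus (vs k) (ls k))) \<longlonglongrightarrow> measure M (halfspace_plus v l)"
proof -
  interpret prob_space M
    using M unfolding continuous_prob_measure_def by auto
  have ind_lim: "(\<lambda>k. indicator (halfspace_plus (vs k) (ls k)) x :: real)
      \<longlonglongrightarrow> indicator (halfspace_plus v l) x" if ne: "inner x v \<noteq> l" for x
  proof -
    have lim: "(\<lambda>k. inner x (vs k) - ls k) \<longlonglongrightarrow> inner x v - l"
      by (intro tendsto_intros vs ls)
    consider "inner x v - l > 0" | "inner x v - l < 0"
      using ne by (cases "inner x v > l") auto
    then have "eventually (\<lambda>k. indicator (halfspace_plus (vs k) (ls k)) x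
        = (indicator (halfspace_plus v l) x :: real)) sequentially"
    proof cases
      case 1
      with order_tendstoD(1)[OF lim, of 0] show ?thesis
        by (auto elim!: eventually_mono simp: halfspace_plus_def indicator_def)
    next
      case 2
      with order_tendstoD(2)[OF lim, of 0] show ?thesis
        by (auto elim!: eventually_mono simp: halfspace_plus_def indicator_def)
    qed
    then show ?thesis
      by (rule tendsto_eventually)
  qed
  have "(\<lambda>k. integral\<^sup>L M (indicator (halfspace_plus (vs k) (ls k)) :: _ \<Rightarrow> real))
      \<longlonglongrightarrow> integral\<^sup>L M (indicator (halfspace_plus v l))"
  proof (rule integral_dominated_convergence[where w="\<lambda>_. 1"])
    show "AE x in M. (\<lambda>k. indicator (halfspace_plus (vs k) (ls k)) x :: real)
        \<longlonglongrightarrow> indicator (halfspace_plus v l) x"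
      using AE_not_in[OF hyperplane_null_sets[OF M v, of l]] by eventually_elim (simp add: ind_lim)
  qed (auto intro: borel_measurable_indicator halfspace_plus_in_sets[OF M] simp: indicator_def)
  then show ?thesis
    using continuous_prob_measure_space[OF M] by simp
qed

text \<open>The cofactors along row i0 of this matrix form a normal vector of the affine hull of the
  points x$j: a generalised cross product of the differences x$j - x$i0.\<close>
definition hyperplane_matrix :: "'n::finite \<Rightarrow> (real^'n)^'n \<Rightarrow> real^'n \<Rightarrow> real^'n^'n" where
  "hyperplane_matrix i0 x y = (\<chi> j. if j = i0 then y else x$j - x$i0)"

definition hyperplane_normal :: "'n::finite \<Rightarrow> (real^'n)^'n \<Rightarrow> real^'n" where
  "hyperplane_normal i0 x = (\<chi> k. det (hyperplane_matrix i0 x (axis k 1)))"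

lemma det_hyperplane_matrix:
  fixes x :: "(real^'n::finite)^'n"
  shows "det (hyperplane_matrix i0 x y) = inner (hyperplane_normal i0 x) y"
proof -
  have "det (hyperplane_matrix i0 x y)
      = det ((\<chi> j. if j = i0 then \<Sum>k\<in>UNIV. y$k *s axis k 1 else x$j - x$i0) :: real^'n^'n)"
    unfolding hyperplane_matrix_def basis_expansion ..
  also have "\<dots> = (\<Sum>k\<in>UNIV. det ((\<chi> j. if j = i0 then y$k *s axis k 1 else x$j - x$i0) :: real^'n^'n))"
    by (rule det_linear_row_sum) simp
  also have "\<dots> = (\<Sum>k\<in>UNIV. y$k * det (hyperplane_matrix i0 x (axis k 1)))"
    unfolding hyperplane_matrix_def by (simp add: det_row_mul)
  also have "\<dots> = inner (hyperplane_normal i0 x) y"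
    by (simp add: hyperplane_normal_def inner_vec_def mult.commute)
  finally show ?thesis .
qed

lemma inner_hyperplane_normal:
  "inner (hyperplane_normal i0 x) (x$j) = inner (hyperplane_normal i0 x) (x$i0)"
proof -
  have "det (hyperplane_matrix i0 x (x$j - x$i0)) = 0"
  proof (cases "j = i0")
    case True
    then show ?thesis
      by (intro det_zero_row(1)[of i0]) (simp add: hyperplane_matrix_def row_def vec_eq_iff)
  next
    case False
    then show ?thesis
      by (intro det_identical_rows[of j i0]) (auto simp: hyperplane_matrix_def row_def vec_eq_iff)
  qed
  then show ?thesis
    by (simp add: det_hyperplane_matrix inner_diff_right)
qed

lemma tendsto_det:
  fixes A :: "'b \<Rightarrow> real^'n::finite^'n"
  assumes "\<And>i j. ((\<lambda>t. A t $ i $ j) \<longlongrightarrow> B $ i $ j) F"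
  shows "((\<lambda>t. det (A t)) \<longlongrightarrow> det B) F"
  unfolding det_def by (intro tendsto_intros assms)

lemma tendsto_hyperplane_normal:
  assumes "(x \<longlongrightarrow> x0) F"
  shows "((\<lambda>t. hyperplane_normal i0 (x t)) \<longlongrightarrow> hyperplane_normal i0 x0) F"
  unfolding hyperplane_normal_def hyperplane_matrix_def
  by (intro tendsto_intros tendsto_det) (auto intro!: tendsto_intros assms)

lemma hyperplane_normal_eq_0_imp_dependent:
  fixes x :: "(real^'n::finite)^'n"
  assumes "hyperplane_normal i0 x = 0"
  obtains d where "d $ i0 = 0" "d \<noteq> 0" "(\<Sum>j\<in>UNIV. d$j *\<^sub>R (x$j - x$i0)) = 0"
proof -
  define R where "R = (\<lambda>j. x$j - x$i0) ` (UNIV - {i0})"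
  have "dim R \<le> card R"
    by (intro dim_le_card span_superset) (simp add: R_def)
  also have "\<dots> \<le> card (UNIV - {i0})"
    unfolding R_def by (rule card_image_le) simp
  also have "\<dots> < CARD('n)"
    by (simp add: card_Diff_singleton)
  finally have "dim R < CARD('n)" .
  moreover have "dim R = CARD('n)" if "span R = UNIV"
    using that dim_span[of R] by simp
  ultimately have "span R \<noteq> UNIV"
    by auto
  then obtain y where y: "y \<notin> span R"
    by blast
  have "det (hyperplane_matrix i0 x y) = 0"
    using assms by (simp add: det_hyperplane_matrix)
  then obtain d where d: "d \<noteq> 0" "d v* hyperplane_matrix i0 x y = 0"
    by (metis det_eq_0_rank det_transpose less_irrefl_nat
        matrix_nonfull_linear_equations_eq transpose_matrix_vector)
  have rows: "(\<Sum>j\<in>UNIV. d$j *\<^sub>R (if j = i0 then y else x$j - x$i0)) = 0"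
    using d(2) by (simp add: hyperplane_matrix_def vec_eq_iff vector_matrix_mult_def
        sum_component mult.commute)
  have rest: "(\<Sum>j\<in>UNIV - {i0}. d$j *\<^sub>R (x$j - x$i0)) \<in> span R"
    by (intro span_sum span_mul span_base) (auto simp: R_def)
  have "(\<Sum>j\<in>UNIV - {i0}. d$j *\<^sub>R (if j = i0 then y else x$j - x$i0))
      = (\<Sum>j\<in>UNIV - {i0}. d$j *\<^sub>R (x$j - x$i0))"
    by (rule sum.cong) auto
  then have split: "d$i0 *\<^sub>R y + (\<Sum>j\<in>UNIV - {i0}. d$j *\<^sub>R (x$j - x$i0)) = 0"
    using rows by (simp add: sum.remove[of UNIV i0])
  have di0: "d $ i0 = 0"
  proof (rule ccontr)
    assume ne: "d $ i0 \<noteq> 0"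
    have "d$i0 *\<^sub>R y \<in> span R"
      using span_add_eq2[OF rest, of "d$i0 *\<^sub>R y"] by (metis split span_zero)
    then have "inverse (d$i0) *\<^sub>R (d$i0 *\<^sub>R y) \<in> span R"
      by (rule span_mul)
    then show False
      using ne y by simp
  qed
  show ?thesis
  proof (rule that[OF di0 d(1)])
    show "(\<Sum>j\<in>UNIV. d$j *\<^sub>R (x$j - x$i0)) = 0"
      using rows di0 by (simp add: sum.remove[of UNIV i0])
  qed
qed

lemma hyperplane_normal_neq_0:
  fixes x :: "(real^'n::finite)^'n"
  assumes indep: "\<And>lam. (\<Sum>j\<in>UNIV. lam j *\<^sub>R x$j) = 0 \<Longrightarrow> sum lam UNIV = 0 \<Longrightarrow> lam = (\<lambda>_. 0)"
  shows "hyperplane_normal i0 x \<noteq> 0"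
proof
  assume "hyperplane_normal i0 x = 0"
  then obtain d where d: "d $ i0 = 0" "d \<noteq> 0" "(\<Sum>j\<in>UNIV. d$j *\<^sub>R (x$j - x$i0)) = 0"
    by (rule hyperplane_normal_eq_0_imp_dependent)
  define lam where "lam j = d$j - (if j = i0 then sum (($) d) UNIV else 0)" for j
  have "(\<Sum>j\<in>UNIV. lam j *\<^sub>R x$j) = (\<Sum>j\<in>UNIV. d$j *\<^sub>R x$j) - sum (($) d) UNIV *\<^sub>R x$i0"
    by (simp add: lam_def scaleR_diff_left sum_subtractf if_distrib[where f="\<lambda>a. a *\<^sub>R _"]
        cong: if_cong)
  also have "\<dots> = (\<Sum>j\<in>UNIV. d$j *\<^sub>R (x$j - x$i0))"
    by (simp add: scaleR_diff_right sum_subtractf scaleR_sum_left)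
  finally have "(\<Sum>j\<in>UNIV. lam j *\<^sub>R x$j) = 0"
    using d(3) by simp
  moreover have "sum lam UNIV = 0"
    by (simp add: lam_def sum_subtractf)
  ultimately have "lam = (\<lambda>_. 0)"
    by (rule indep)
  moreover obtain j where "d $ j \<noteq> 0"
    using d(2) by (metis vec_eq_iff zero_index)
  ultimately show False
    using d(1) by (metis lam_def diff_zero)
qed

definition strictly_separable :: "('n \<Rightarrow> 'a::real_inner set) \<Rightarrow> bool" where
  "strictly_separable K \<longleftrightarrow>
     (\<forall>\<sigma>::'n \<Rightarrow> bool. \<exists>v l. \<forall>i. \<forall>y\<in>K i. if \<sigma> i then l < inner y v else inner y v < l)"

text \<open>Separate with the sign pattern of the coefficients: every summand of
  \<Sum>j. lam j * (inner (x$j) v - l) is then nonnegative and the sum vanishes.\<close>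
lemma strictly_separable_imp_affinely_independent:
  fixes x :: "'a::real_inner^'n::finite"
  assumes "strictly_separable K" and x: "\<And>i. x$i \<in> K i"
    and "(\<Sum>j\<in>UNIV. lam j *\<^sub>R x$j) = 0" "sum lam UNIV = 0"
  shows "lam = (\<lambda>_. 0)"
proof (rule ccontr)
  assume "lam \<noteq> (\<lambda>_. 0)"
  then obtain j0 where j0: "lam j0 \<noteq> 0"
    by auto
  obtain v l where vl: "\<forall>i. \<forall>y\<in>K i. if 0 < lam i then l < inner y v else inner y v < l"
    using assms(1)[unfolded strictly_separable_def, rule_format, of "\<lambda>i. 0 < lam i"] by blast
  have pos: "lam j * (inner (x$j) v - l) > 0" if "lam j \<noteq> 0" for j
  proof (cases "lam j > 0")
    case True
    then have "l < inner (x$j) v"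
      using vl x[of j] by auto
    with True show ?thesis
      by simp
  next
    case False
    then have "lam j < 0" "inner (x$j) v < l"
      using that vl x[of j] by auto
    then show ?thesis
      by (simp add: mult_neg_neg)
  qed
  have "lam j * (inner (x$j) v - l) \<ge> 0" for j
    using pos[of j] by (cases "lam j = 0") auto
  then have "0 < (\<Sum>j\<in>UNIV. lam j * (inner (x$j) v - l))"
    using pos[OF j0] by (intro sum_pos2[of UNIV j0]) auto
  also have "\<dots> = inner (\<Sum>j\<in>UNIV. lam j *\<^sub>R x$j) v - l * sum lam UNIV"
    by (simp add: inner_sum_left sum_subtractf right_diff_distrib sum_distrib_left mult.commute)
  finally show False
    using assms(3,4) by simp
qed

lemma compact_vector_box:
  fixes K :: "'n::finite \<Rightarrow> 'a::euclidean_space set"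
  assumes "\<And>i. compact (K i)"
  shows "compact {x. \<forall>i. x$i \<in> K i}"
proof -
  obtain B where B: "\<And>i y. y \<in> K i \<Longrightarrow> norm y \<le> B i"
    using compact_imp_bounded[OF assms] unfolding bounded_iff by metis
  have "norm x \<le> sum B UNIV" if "\<forall>i. x$i \<in> K i" for x :: "'a^'n"
  proof -
    have "norm x \<le> (\<Sum>i\<in>UNIV. norm (x$i))"
      unfolding norm_vec_def by (rule L2_set_le_sum) simp
    also have "\<dots> \<le> sum B UNIV"
      using that B by (intro sum_mono) auto
    finally show ?thesis .
  qed
  then have "bounded {x. \<forall>i. x$i \<in> K i}"
    unfolding bounded_iff by blast
  moreover have "closed {x. \<forall>i. x$i \<in> K i}"
    using assms by (intro closed_vector_box) (simp add: compact_imp_closed)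
  ultimately show ?thesis
    by (simp add: compact_eq_bounded_closed)
qed

lemma convex_vector_box:
  fixes K :: "'n::finite \<Rightarrow> 'a::real_vector set"
  assumes "\<And>i. convex (K i)"
  shows "convex {x. \<forall>i. x$i \<in> K i}"
  using assms by (auto simp: convex_def)

lemma closest_point_fixed_level:
  fixes g :: "real \<Rightarrow> real" and N x y :: "'a::euclidean_space"
  assumes K: "convex K" "closed K" "y \<in> K" and g: "antimono g" "g (inner N y) = \<alpha>"
    and fixed: "closest_point K (x + (g (inner N x) - \<alpha>) *\<^sub>R N) = x"
  shows "g (inner N x) = \<alpha>"
proof -
  have "(g (inner N x) - \<alpha>) * (inner N y - inner N x) \<le> 0"
    using closest_point_dot[OF K, of "x + (g (inner N x) - \<alpha>) *\<^sub>R N"]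
    by (simp add: fixed inner_diff_right right_diff_distrib)
  moreover have "g (inner N x) \<le> \<alpha>" if "inner N y \<le> inner N x"
    using antimonoD[OF g(1) that] g(2) by simp
  moreover have "\<alpha> \<le> g (inner N x)" if "inner N x \<le> inner N y"
    using antimonoD[OF g(1) that] g(2) by simp
  ultimately show ?thesis
    by (smt (verit) mult_le_0_iff)
qed

lemma common_level_hyperplane:
  fixes K :: "'n::finite \<Rightarrow> (real^'n) set" and G :: "'n \<Rightarrow> real^'n \<Rightarrow> real \<Rightarrow> real"
  assumes K: "\<And>i. compact (K i)" "\<And>i. convex (K i)" "\<And>i. K i \<noteq> {}"
    and sep: "strictly_separable K"
    and G_cont: "\<And>i N l Ns ls. N \<noteq> 0 \<Longrightarrow> Ns \<longlonglongrightarrow> N \<Longrightarrow> ls \<longlonglongrightarrow> l \<Longrightarrow>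
                  (\<lambda>k. G i (Ns k) (ls k)) \<longlonglongrightarrow> G i N l"
    and G_antimono: "\<And>i N. N \<noteq> 0 \<Longrightarrow> antimono (G i N)"
    and G_level: "\<And>i N. N \<noteq> 0 \<Longrightarrow> \<exists>y\<in>K i. G i N (inner N y) = \<alpha> i"
  shows "\<exists>N l. N \<noteq> 0 \<and> (\<forall>i. G i N l = \<alpha> i) \<and> (\<forall>i. \<exists>y\<in>K i. inner N y = l)"
proof -
  obtain i0 :: 'n where True
    by simp
  define X where "X = {x::(real^'n)^'n. \<forall>i. x$i \<in> K i}"
  define N where "N x = hyperplane_normal i0 x" for x
  define L where "L x = inner (N x) (x$i0)" for x
  define F where "F i x = G i (N x) (L x) - \<alpha> i" for i x
  define T where "T x = (\<chi> i. closest_point (K i) (x$i + F i x *\<^sub>R N x))" for x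
  have closedK: "closed (K i)" for i
    by (rule compact_imp_closed[OF K(1)])
  have N_neq_0: "N x \<noteq> 0" if "x \<in> X" for x
    using that strictly_separable_imp_affinely_independent[OF sep]
    unfolding N_def X_def by (intro hyperplane_normal_neq_0) auto
  have T_cont: "continuous_on X T"
    unfolding continuous_on_sequentially
  proof (intro allI ballI impI, elim conjE)
    fix xs x assume x: "x \<in> X" and lim: "xs \<longlonglongrightarrow> x"
    have N_lim: "(\<lambda>k. N (xs k)) \<longlonglongrightarrow> N x"
      unfolding N_def by (rule tendsto_hyperplane_normal[OF lim])
    have "(\<lambda>k. F i (xs k)) \<longlonglongrightarrow> F i x" for i
      unfolding F_def L_def
      by (intro tendsto_diff tendsto_const G_cont[OF N_neq_0[OF x] N_lim]
          tendsto_inner N_lim tendsto_vec_nth lim)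
    then have "(\<lambda>k. xs k $ i + F i (xs k) *\<^sub>R N (xs k)) \<longlonglongrightarrow> x $ i + F i x *\<^sub>R N x" for i
      by (intro tendsto_intros N_lim lim)
    then show "(T \<circ> xs) \<longlonglongrightarrow> T x"
      unfolding o_def T_def
      by (intro tendsto_vec_lambda continuous_on_tendsto_compose[where s=UNIV,
          OF continuous_on_closest_point[OF K(2) closedK K(3)]]) auto
  qed
  have T_maps: "T \<in> X \<rightarrow> X"
    unfolding T_def X_def using closest_point_in_set[OF closedK K(3)] by auto
  have X: "compact X" "convex X"
    unfolding X_def using K by (auto intro: compact_vector_box convex_vector_box)
  have "(\<chi> i. SOME y. y \<in> K i) \<in> X"
    using K(3) unfolding X_def by (simp add: some_in_eq)
  then obtain x where x: "x \<in> X" "T x = x"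
    using brouwer[OF X _ T_cont T_maps] by blast
  have on_plane: "inner (N x) (x$i) = L x" for i
    unfolding L_def N_def by (rule inner_hyperplane_normal)
  have level: "G i (N x) (L x) = \<alpha> i" for i
  proof -
    obtain y where y: "y \<in> K i" "G i (N x) (inner (N x) y) = \<alpha> i"
      using G_level[OF N_neq_0[OF x(1)]] by blast
    have fixed: "closest_point (K i) (x$i + (G i (N x) (inner (N x) (x$i)) - \<alpha> i) *\<^sub>R N x) = x$i"
      using arg_cong[OF x(2), of "\<lambda>x. x$i"] by (simp add: T_def F_def on_plane)
    have "G i (N x) (inner (N x) (x$i)) = \<alpha> i"
      by (rule closest_point_fixed_level[OF K(2) closedK y(1) G_antimono[OF N_neq_0[OF x(1)]] y(2) fixed])
    then show ?thesis
      by (simp add: on_plane)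
  qed
  moreover have "\<exists>y\<in>K i. inner (N x) y = L x" for i
    using x(1) on_plane unfolding X_def by blast
  ultimately show ?thesis
    using N_neq_0[OF x(1)] by blast
qed

lemma separable_by_hyperplanes_imp_strictly_separable:
  fixes S :: "'n \<Rightarrow> 'a::euclidean_space set"
  assumes "separable_by_hyperplanes S"
  shows "strictly_separable S"
  unfolding strictly_separable_def
proof
  fix \<sigma> :: "'n \<Rightarrow> bool"
  obtain v l where v: "v \<noteq> 0"
    and vl: "\<forall>i. S i \<subseteq> interior (if \<sigma> i then halfspace_plus v l else halfspace_minus v l)"
    using assms unfolding separable_by_hyperplanes_def by blast
  have halfspaces: "halfspace_plus v l = {x. v \<bullet> x \<ge> l}" "halfspace_minus v l = {x. v \<bullet> x \<le> l}"
    by (auto simp: halfspace_plus_def halfspace_minus_def inner_commute)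
  have "if \<sigma> i then l < inner y v else inner y v < l" if "y \<in> S i" for i y
  proof -
    have "y \<in> interior (if \<sigma> i then halfspace_plus v l else halfspace_minus v l)"
      using vl that by blast
    then show ?thesis
      using v by (cases "\<sigma> i") (simp_all add: halfspaces, simp_all add: inner_commute)
  qed
  then show "\<exists>v l. \<forall>i. \<forall>y\<in>S i. if \<sigma> i then l < inner y v else inner y v < l"
    by blast
qed

lemma strictly_separable_shrink:
  fixes S :: "'n \<Rightarrow> 'a::real_inner set"
  assumes sep: "strictly_separable S" and c: "\<And>i. c i \<in> S i" and e: "0 < e" "e \<le> 1"
  shows "strictly_separable (\<lambda>i. (\<lambda>y. e *\<^sub>R c i + (1 - e) *\<^sub>R y) ` closure (convex hull S i))"
  unfolding strictly_separable_def
proof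
  fix \<sigma> :: "'n \<Rightarrow> bool"
  obtain v l where vl: "\<forall>i. \<forall>y\<in>S i. if \<sigma> i then l < inner y v else inner y v < l"
    using sep unfolding strictly_separable_def by blast
  define w where "w i = (if \<sigma> i then v else - v)" for i
  define m where "m i = (if \<sigma> i then l else - l)" for i
  have side: "(if \<sigma> i then l < inner y v else inner y v < l) \<longleftrightarrow> m i < inner (w i) y" for i y
    by (auto simp: w_def m_def inner_commute)
  have "closure (convex hull S i) \<subseteq> {y. m i \<le> inner (w i) y}" for i
    using vl side
    by (intro closure_minimal hull_minimal) (auto simp: convex_halfspace_ge closed_halfspace_ge less_imp_le)
  moreover have "m i < inner (w i) (c i)" for i
    using vl side c by blast
  ultimately have "m i < inner (w i) (e *\<^sub>R c i + (1 - e) *\<^sub>R y)"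
    if "y \<in> closure (convex hull S i)" for i y
  proof -
    have "m i = e * m i + (1 - e) * m i"
      by algebra
    also have "\<dots> < e * inner (w i) (c i) + (1 - e) * inner (w i) y"
      using \<open>m i < inner (w i) (c i)\<close> \<open>closure (convex hull S i) \<subseteq> _\<close> that e
      by (intro add_less_le_mono mult_left_mono) auto
    finally show ?thesis
      by (simp add: inner_add_right)
  qed
  then have "\<forall>i. \<forall>y\<in>(\<lambda>y. e *\<^sub>R c i + (1 - e) *\<^sub>R y) ` closure (convex hull S i).
      if \<sigma> i then l < inner y v else inner y v < l"
    unfolding side by blast
  then show "\<exists>v l. \<forall>i. \<forall>y\<in>(\<lambda>y. e *\<^sub>R c i + (1 - e) *\<^sub>R y) ` closure (convex hull S i).
      if \<sigma> i then l < inner y v else inner y v < l"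
    by blast
qed

lemma approximate_common_halfspace:
  fixes \<mu> :: "'n::finite \<Rightarrow> (real^'n) measure" and f :: "'n \<Rightarrow> real^'n \<Rightarrow> real^'n"
    and K :: "'n \<Rightarrow> (real^'n) set" and c :: "'n \<Rightarrow> real^'n"
  assumes cont: "\<And>i. continuous_prob_measure (\<mu> i)"
    and f: "\<And>i v. v \<in> sphere 0 1 \<Longrightarrow> measure (\<mu> i) (halfspace_plus v (inner v (f i v))) = \<alpha> i"
    and K: "\<And>i. compact (K i)" "\<And>i. convex (K i)"
    and fK: "\<And>i v. v \<in> sphere 0 1 \<Longrightarrow> f i v \<in> K i" and cK: "\<And>i. c i \<in> K i"
    and sep: "strictly_separable (\<lambda>i. (\<lambda>y. e *\<^sub>R c i + (1 - e) *\<^sub>R y) ` K i)"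
    and e: "0 < e" "e < 1"
  shows "\<exists>v y. v \<in> sphere 0 1 \<and> (\<forall>i. y$i \<in> K i)
    \<and> (\<forall>i. measure (\<mu> i) (halfspace_plus v (inner v (y$i))) = \<alpha> i)
    \<and> (\<forall>i j. inner v (e *\<^sub>R c i + (1 - e) *\<^sub>R y$i) = inner v (e *\<^sub>R c j + (1 - e) *\<^sub>R y$j))"
proof -
  define Ke where "Ke i = (\<lambda>y. e *\<^sub>R c i + (1 - e) *\<^sub>R y) ` K i" for i
  define G where "G i N l = measure (\<mu> i) (halfspace_plus N ((l - e * inner N (c i)) / (1 - e)))"
    for i N l
  have G_shift: "G i N (inner N (e *\<^sub>R c i + (1 - e) *\<^sub>R y)) = measure (\<mu> i) (halfspace_plus N (inner N y))"
    for i N y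
    using e by (simp add: G_def inner_add_right)
  obtain N l where N: "N \<noteq> 0" and level: "\<forall>i. G i N l = \<alpha> i"
    and on_plane: "\<forall>i. \<exists>z\<in>Ke i. inner N z = l"
  proof (atomize_elim, rule common_level_hyperplane[OF _ _ _ sep[folded Ke_def]])
    show "compact (Ke i)" for i
      unfolding Ke_def by (rule compact_affinity[OF K(1)])
    show "convex (Ke i)" for i
      unfolding Ke_def by (rule convex_affinity[OF K(2)])
    show "Ke i \<noteq> {}" for i
      using cK by (auto simp: Ke_def)
    show "(\<lambda>k. G i (Ns k) (ls k)) \<longlonglongrightarrow> G i N l"
      if "N \<noteq> 0" "Ns \<longlonglongrightarrow> N" "ls \<longlonglongrightarrow> l" for i N l Ns ls
      unfolding G_def using e
      by (intro tendsto_measure_halfspace_plus[OF cont that(1,2)] tendsto_intros that(2,3)) simp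
    show "antimono (G i N)" for i N
      unfolding G_def using e
      by (intro antimonoI antimonoD[OF antimono_measure_halfspace_plus[OF cont]] divide_right_mono)
        auto
    show "\<exists>z\<in>Ke i. G i N (inner N z) = \<alpha> i" if "N \<noteq> 0" for i N
    proof -
      have u: "sgn N \<in> sphere 0 1"
        using that by (simp add: norm_sgn)
      then have "G i N (inner N (e *\<^sub>R c i + (1 - e) *\<^sub>R f i (sgn N))) = \<alpha> i"
        using f[OF u, of i] by (simp add: G_shift halfspace_plus_sgn)
      then show ?thesis
        using fK[OF u] by (auto simp: Ke_def)
    qed
  qed
  obtain y where y: "\<And>i. y i \<in> K i" "\<And>i. inner N (e *\<^sub>R c i + (1 - e) *\<^sub>R y i) = l"
    using on_plane by (auto simp: Ke_def choice_iff' Ball_def) metis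
  show ?thesis
  proof (intro exI conjI allI)
    show "sgn N \<in> sphere 0 1"
      using N by (simp add: norm_sgn)
    show "(\<chi> i. y i) $ i \<in> K i" for i
      using y(1) by simp
    show "measure (\<mu> i) (halfspace_plus (sgn N) (inner (sgn N) ((\<chi> i. y i) $ i))) = \<alpha> i" for i
      using level y(2)[of i] G_shift[of i N "y i"] by (simp add: halfspace_plus_sgn)
    show "inner (sgn N) (e *\<^sub>R c i + (1 - e) *\<^sub>R (\<chi> i. y i) $ i)
        = inner (sgn N) (e *\<^sub>R c j + (1 - e) *\<^sub>R (\<chi> i. y i) $ j)" for i j
      using y(2)[of i] y(2)[of j] by (simp add: sgn_div_norm)
  qed
qed

lemma common_halfspace_limit:
  fixes \<mu> :: "'n::finite \<Rightarrow> (real^'n) measure"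
    and v :: "nat \<Rightarrow> real^'n" and y :: "nat \<Rightarrow> (real^'n)^'n" and e :: "nat \<Rightarrow> real"
  assumes cont: "\<And>i. continuous_prob_measure (\<mu> i)"
    and K: "\<And>i. compact (K i)" and e: "e \<longlonglongrightarrow> 0"
    and v: "\<And>k. v k \<in> sphere 0 1" and y: "\<And>k i. y k $ i \<in> K i"
    and meas: "\<And>k i. measure (\<mu> i) (halfspace_plus (v k) (inner (v k) (y k $ i))) = \<alpha> i"
    and level: "\<And>k i j. inner (v k) (e k *\<^sub>R c i + (1 - e k) *\<^sub>R y k $ i)
                       = inner (v k) (e k *\<^sub>R c j + (1 - e k) *\<^sub>R y k $ j)"
  shows "\<exists>v l. v \<noteq> 0 \<and> (\<forall>i. measure (\<mu> i) (halfspace_plus v l) = \<alpha> i)"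
proof -
  have "seq_compact (sphere (0::real^'n) 1 \<times> {x. \<forall>i. x$i \<in> K i})"
    using compact_Times[OF compact_sphere compact_vector_box[OF K]] by (rule compact_imp_seq_compact)
  moreover have "\<forall>k. (v k, y k) \<in> sphere 0 1 \<times> {x. \<forall>i. x$i \<in> K i}"
    using v y by simp
  ultimately obtain q r where q: "q \<in> sphere 0 1 \<times> {x. \<forall>i. x$i \<in> K i}" and r: "strict_mono r"
    and lim: "((\<lambda>k. (v k, y k)) \<circ> r) \<longlonglongrightarrow> q"
    by (rule seq_compactE)
  obtain v0 y0 where q_eq: "q = (v0, y0)"
    by (cases q)
  have v0: "v0 \<noteq> 0"
    using q by (auto simp: q_eq)
  have v_lim: "(\<lambda>k. v (r k)) \<longlonglongrightarrow> v0" and y_lim: "(\<lambda>k. y (r k)) \<longlonglongrightarrow> y0"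
    using tendsto_fst[OF lim] tendsto_snd[OF lim] by (simp_all add: o_def q_eq)
  have e_lim: "(\<lambda>k. e (r k)) \<longlonglongrightarrow> 0"
    using LIMSEQ_subseq_LIMSEQ[OF e r] by (simp add: o_def)
  have threshold_lim: "(\<lambda>k. inner (v (r k)) (y (r k) $ i)) \<longlonglongrightarrow> inner v0 (y0 $ i)" for i
    by (intro tendsto_intros v_lim y_lim)
  have level_lim: "(\<lambda>k. inner (v (r k)) (e (r k) *\<^sub>R c i + (1 - e (r k)) *\<^sub>R y (r k) $ i))
      \<longlonglongrightarrow> inner v0 (y0 $ i)" for i
  proof -
    have "(\<lambda>k. inner (v (r k)) (e (r k) *\<^sub>R c i + (1 - e (r k)) *\<^sub>R y (r k) $ i))
        \<longlonglongrightarrow> inner v0 (0 *\<^sub>R c i + (1 - 0) *\<^sub>R y0 $ i)"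
      by (intro tendsto_inner v_lim tendsto_add tendsto_scaleR tendsto_diff tendsto_const
          tendsto_vec_nth y_lim e_lim)
    then show ?thesis
      by simp
  qed
  have same_level: "inner v0 (y0 $ i) = inner v0 (y0 $ j)" for i j
  proof -
    have "(\<lambda>k. inner (v (r k)) (e (r k) *\<^sub>R c i + (1 - e (r k)) *\<^sub>R y (r k) $ i))
        = (\<lambda>k. inner (v (r k)) (e (r k) *\<^sub>R c j + (1 - e (r k)) *\<^sub>R y (r k) $ j))"
      by (rule ext) (rule level)
    with level_lim[of j] show ?thesis
      by (intro LIMSEQ_unique[OF level_lim[of i]]) simp
  qed
  have limit_meas: "measure (\<mu> i) (halfspace_plus v0 (inner v0 (y0 $ i))) = \<alpha> i" for i
  proof -
    have "(\<lambda>k. measure (\<mu> i) (halfspace_plus (v (r k)) (inner (v (r k)) (y (r k) $ i))))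
        \<longlonglongrightarrow> measure (\<mu> i) (halfspace_plus v0 (inner v0 (y0 $ i)))"
      by (rule tendsto_measure_halfspace_plus[OF cont v0 v_lim threshold_lim])
    then show ?thesis
      unfolding meas by (rule LIMSEQ_unique[OF tendsto_const, symmetric])
  qed
  obtain i0 :: 'n where True
    by simp
  have "measure (\<mu> i) (halfspace_plus v0 (inner v0 (y0 $ i0))) = \<alpha> i" for i
    using limit_meas[of i] same_level[of i i0] by simp
  then show ?thesis
    using v0 by blast
qed

theorem mainTheorem1:
  fixes \<mu> :: "'n::finite \<Rightarrow> (real^'n) measure"
    and \<alpha> :: "'n \<Rightarrow> real"
    and f :: "'n \<Rightarrow> real^'n \<Rightarrow> real^'n"
  assumes cont: "\<And>i. continuous_prob_measure (\<mu> i)"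
    and alpha: "\<And>i. 0 \<le> \<alpha> i \<and> \<alpha> i \<le> 1"
    and fmeas: "\<And>i v. v \<in> sphere 0 1 \<Longrightarrow>
                 measure (\<mu> i) (halfspace_plus v (inner v (f i v))) = \<alpha> i"
    and fbdd: "\<And>i. bounded (f i ` sphere 0 1)"
    and sep: "separable_by_hyperplanes (\<lambda>i. f i ` sphere 0 1)"
  shows "\<exists>v l. v \<noteq> 0 \<and> (\<forall>i. measure (\<mu> i) (halfspace_plus v l) = \<alpha> i)"
proof -
  obtain u0 :: "real^'n" where u0: "u0 \<in> sphere 0 1"
    using sphere_eq_empty[of "0::real^'n" 1] by fastforce
  define K where "K i = closure (convex hull (f i ` sphere 0 1))" for i
  define c where "c i = f i u0" for i
  define e where "e k = 1 / (real k + 2)" for k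
  have K: "compact (K i)" "convex (K i)" for i
    unfolding K_def using fbdd bounded_convex_hull by (auto simp: compact_closure convex_closure)
  have fK: "f i v \<in> K i" if "v \<in> sphere 0 1" for i v
    using that closure_subset hull_subset unfolding K_def by fastforce
  have "\<exists>v y. v \<in> sphere 0 1 \<and> (\<forall>i. y$i \<in> K i)
    \<and> (\<forall>i. measure (\<mu> i) (halfspace_plus v (inner v (y$i))) = \<alpha> i)
    \<and> (\<forall>i j. inner v (e k *\<^sub>R c i + (1 - e k) *\<^sub>R y$i) = inner v (e k *\<^sub>R c j + (1 - e k) *\<^sub>R y$j))"
    for k
  proof (rule approximate_common_halfspace[OF cont fmeas K fK])
    show "strictly_separable (\<lambda>i. (\<lambda>y. e k *\<^sub>R c i + (1 - e k) *\<^sub>R y) ` K i)"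
      unfolding K_def c_def e_def using u0
      by (intro strictly_separable_shrink separable_by_hyperplanes_imp_strictly_separable sep) auto
  qed (use u0 fK in \<open>auto simp: c_def e_def\<close>)
  then obtain v y where "\<And>k. v k \<in> sphere 0 1" "\<And>k i. y k $ i \<in> K i"
    "\<And>k i. measure (\<mu> i) (halfspace_plus (v k) (inner (v k) (y k $ i))) = \<alpha> i"
    "\<And>k i j. inner (v k) (e k *\<^sub>R c i + (1 - e k) *\<^sub>R y k $ i)
        = inner (v k) (e k *\<^sub>R c j + (1 - e k) *\<^sub>R y k $ j)"
    by metis
  moreover have "e \<longlonglongrightarrow> 0"
    unfolding e_def by real_asymp
  ultimately show ?thesis
    by (intro common_halfspace_limit[OF cont K(1)])
qed

end
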